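(* Suppose a finite graph $G$ is a cluster of induced subgraphs $G_1,\ldots,G_k$. (i) If $G$ has cluster-girth at least $4$ then $\mathrm{Cl}(G)$ is isomorphic to a cluster of the complexes $\mathrm{Cl}(G_1),\ldots,\mathrm{Cl}(G_k)$ of the same shape as $G$. (ii) If $G$ has cluster-girth at least $5$ then $N[G]$ is homotopy equivalent to a cluster of the complexes $N[G_1],\ldots,N[G_k]$ of the same shape as $G$.
   Context: Graphs are simple, loopless and undirected. A finite graph (resp. simplicial complex) $X$ is a cluster of $X_1,\ldots,X_k$ (its parts) if $X_1,\ldots,X_k$ are induced subgraphs (resp. induced subcomplexes) of $X$ with $X=X_1\cup\cdots\cup X_k$ and such that for all $i\neq j$ the intersection $X_i\cap X_j$ is either empty or consists of a single vertex. The shape of the cluster is the hypergraph with vertex set $V(X)$ and hyperedges $\{V(X_i):i=1,\ldots,k\}$. The cluster-girth is the smallest $l\geq 3$ such that there exist pairwise distinct vertices $v_0,\ldots,v_{l-1}$ and pairwise distinct indices $i_0,\ldots,i_{l-1}$ with $v_j\in V(X_{i_{j-1}})\cap V(X_{i_j})$ for $j=0,\ldots,l-1$ (indices modulo $l$); it is infinite if no such cycle exists. For a graph $G$: $\mathrm{Cl}(G)$ is the clique complex (faces are vertex sets of complete subgraphs); $N_G[v]=\{v\}\cup\{w: vw\in E(G)\}$ is the closed neighbourhood; the closed neighbourhood complex $N[G]$ is the simplicial complex on $V(G)$ whose faces are all sets $\sigma$ with $\sigma\subseteq N_G[v]$ for some $v\in V(G)$. *)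

theory Defs
  imports "HOL-Analysis.Analysis" "HOL-Library.Extended_Nat"
begin

definition simple_graph :: "'a set \<Rightarrow> 'a set set \<Rightarrow> bool" where
  "simple_graph V E \<longleftrightarrow> finite V \<and> (\<forall>e\<in>E. \<exists>u v. u \<noteq> v \<and> u \<in> V \<and> v \<in> V \<and> e = {u, v})"

definition induced_edges :: "'a set set \<Rightarrow> 'a set \<Rightarrow> 'a set set" where
  "induced_edges E W = {e \<in> E. e \<subseteq> W}"

text \<open>G = (V,E) is a cluster of the induced subgraphs G_i = G[Vs i], i < k.\<close>
definition graph_cluster :: "'a set \<Rightarrow> 'a set set \<Rightarrow> nat \<Rightarrow> (nat \<Rightarrow> 'a set) \<Rightarrow> bool" where
  "graph_cluster V E k Vs \<longleftrightarrow>
     (\<forall>i<k. Vs i \<subseteq> V) \<and>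
     V = (\<Union>i<k. Vs i) \<and>
     E = (\<Union>i<k. induced_edges E (Vs i)) \<and>
     (\<forall>i<k. \<forall>j<k. i \<noteq> j \<longrightarrow> card (Vs i \<inter> Vs j) \<le> 1)"

text \<open>Shape of a cluster: the hypergraph (vertex set, set of vertex sets of parts).\<close>
definition shape :: "'a set \<Rightarrow> nat \<Rightarrow> (nat \<Rightarrow> 'a set) \<Rightarrow> 'a set \<times> 'a set set" where
  "shape V k Vs = (V, Vs ` {..<k})"

definition has_cluster_cycle :: "nat \<Rightarrow> (nat \<Rightarrow> 'a set) \<Rightarrow> nat \<Rightarrow> bool" where
  "has_cluster_cycle k Vs l \<longleftrightarrow>
     (\<exists>(v :: nat \<Rightarrow> 'a) (ix :: nat \<Rightarrow> nat).
        inj_on v {..<l} \<and> inj_on ix {..<l} \<and> (\<forall>j<l. ix j < k) \<and>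
        (\<forall>j<l. v j \<in> Vs (ix ((j + l - 1) mod l)) \<inter> Vs (ix j)))"

text \<open>Cluster-girth: least l \<ge> 3 admitting a cluster cycle; infinite if none.\<close>
definition cluster_girth :: "nat \<Rightarrow> (nat \<Rightarrow> 'a set) \<Rightarrow> enat" where
  "cluster_girth k Vs = (INF l \<in> {l. 3 \<le> l \<and> has_cluster_cycle k Vs l}. enat l)"

definition simplicial_complex :: "'a set set \<Rightarrow> bool" where
  "simplicial_complex K \<longleftrightarrow> finite K \<and> (\<forall>\<sigma>\<in>K. finite \<sigma> \<and> \<sigma> \<noteq> {}) \<and>
     (\<forall>\<sigma>\<in>K. \<forall>\<tau>. \<tau> \<subseteq> \<sigma> \<and> \<tau> \<noteq> {} \<longrightarrow> \<tau> \<in> K)"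

definition cverts :: "'a set set \<Rightarrow> 'a set" where
  "cverts K = \<Union>K"

definition induced_subcomplex :: "'a set set \<Rightarrow> 'a set set \<Rightarrow> bool" where
  "induced_subcomplex L K \<longleftrightarrow> L \<subseteq> K \<and> (\<forall>\<sigma>\<in>K. \<sigma> \<subseteq> cverts L \<longrightarrow> \<sigma> \<in> L)"

definition complex_cluster :: "'a set set \<Rightarrow> nat \<Rightarrow> (nat \<Rightarrow> 'a set set) \<Rightarrow> bool" where
  "complex_cluster X k Xs \<longleftrightarrow>
     simplicial_complex X \<and>
     (\<forall>i<k. simplicial_complex (Xs i) \<and> induced_subcomplex (Xs i) X) \<and>
     X = (\<Union>i<k. Xs i) \<and>
     (\<forall>i<k. \<forall>j<k. i \<noteq> j \<longrightarrow> card (cverts (Xs i) \<inter> cverts (Xs j)) \<le> 1)"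

definition complex_iso :: "'a set set \<Rightarrow> 'b set set \<Rightarrow> bool" where
  "complex_iso K L \<longleftrightarrow> (\<exists>f. bij_betw f (cverts K) (cverts L) \<and>
      (\<forall>\<sigma>. \<sigma> \<subseteq> cverts K \<longrightarrow> (\<sigma> \<in> K \<longleftrightarrow> f ` \<sigma> \<in> L)))"

text \<open>Geometric realization of a finite complex K, as a subspace of R^(cverts K)
  (product topology): convex combinations of vertices supported on a face.\<close>
definition realization :: "'a set set \<Rightarrow> ('a \<Rightarrow> real) topology" where
  "realization K = subtopology (powertop_real (cverts K))
     {f. f \<in> extensional (cverts K) \<and> (\<forall>v\<in>cverts K. 0 \<le> f v) \<and>
         sum f (cverts K) = 1 \<and> {v \<in> cverts K. f v \<noteq> 0} \<in> K}"

definition clique_complex :: "'a set \<Rightarrow> 'a set set \<Rightarrow> 'a set set" where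
  "clique_complex V E = {\<sigma>. \<sigma> \<noteq> {} \<and> \<sigma> \<subseteq> V \<and> finite \<sigma> \<and>
      (\<forall>u\<in>\<sigma>. \<forall>v\<in>\<sigma>. u \<noteq> v \<longrightarrow> {u, v} \<in> E)}"

definition closed_nbhd :: "'a set \<Rightarrow> 'a set set \<Rightarrow> 'a \<Rightarrow> 'a set" where
  "closed_nbhd V E v = insert v {w \<in> V. {v, w} \<in> E}"

definition nbhd_complex :: "'a set \<Rightarrow> 'a set set \<Rightarrow> 'a set set" where
  "nbhd_complex V E = {\<sigma>. \<sigma> \<noteq> {} \<and> (\<exists>v\<in>V. \<sigma> \<subseteq> closed_nbhd V E v)}"

end

theory Submission
  imports Defs
begin

text \<open>
  Girth at least 4 means that a triangle of \<open>G\<close> never uses edges of two different parts, so every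
  clique lies in a single part and \<open>Cl(G)\<close> is literally the union of the \<open>Cl(G\<^sub>i)\<close>.

  For (ii), the union \<open>X\<close> of the \<open>N[G\<^sub>i]\<close> is a subcomplex of \<open>N[G]\<close> on the same vertices, and
  \<open>|N[G]|\<close> deformation retracts onto \<open>|X|\<close>. A face of \<open>N[G]\<close> inside \<open>N[v]\<close> can only fail to
  lie in \<open>X\<close> through a crossing pair at \<open>v\<close>: neighbours \<open>a\<close>, \<open>b\<close> of \<open>v\<close> such that the edges
  \<open>va\<close> and \<open>vb\<close> lie in different parts. Girth at least 5 makes the centre \<open>v\<close> of a crossing pair
  unique, even among all closed neighbourhoods containing \<open>a\<close> and \<open>b\<close>: a second centre \<open>w\<close>
  would close the square \<open>v a w b\<close> through at least two parts, hence a cluster cycle of length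
  3 or 4. So for a point \<open>x\<close> of \<open>|N[G]|\<close> supported in \<open>N[v]\<close> let \<open>c\<close> be the largest value
  \<open>min (x a) (x b)\<close> over crossing pairs at \<open>v\<close>, and move the weight \<open>min (x u) c\<close> from every
  neighbour \<open>u\<close> of \<open>v\<close> to \<open>v\<close>. This is continuous, destroys all crossing pairs, fixes \<open>|X|\<close>,
  and the segment from \<open>x\<close> to its image stays over \<open>N[v]\<close>.
\<close>

lemma no_cluster_cycle_below_girth:
  assumes "enat m \<le> cluster_girth k Vs" "3 \<le> l" "l < m"
  shows "\<not> has_cluster_cycle k Vs l"
proof
  assume "has_cluster_cycle k Vs l"
  then have "cluster_girth k Vs \<le> enat l"
    unfolding cluster_girth_def using assms(2) by (intro INF_lower) auto
  with assms(1) have "enat m \<le> enat l" by (rule order_trans)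
  with assms(3) show False by simp
qed

lemma all_less_3: "(\<forall>j<(3::nat). P j) \<longleftrightarrow> P 0 \<and> P 1 \<and> P 2"
  by (auto simp: eval_nat_numeral less_Suc_eq)

lemma all_less_4: "(\<forall>j<(4::nat). P j) \<longleftrightarrow> P 0 \<and> P 1 \<and> P 2 \<and> P 3"
  by (auto simp: eval_nat_numeral less_Suc_eq)

lemma has_cluster_cycle_3I:
  assumes "distinct [x, y, z]" "distinct [P, Q, R]" "P < k" "Q < k" "R < k"
    "{x, y} \<subseteq> Vs P" "{y, z} \<subseteq> Vs Q" "{z, x} \<subseteq> Vs R"
  shows "has_cluster_cycle k Vs 3"
  unfolding has_cluster_cycle_def
proof (intro exI conjI)
  show "inj_on ((!) [x, y, z]) {..<3}" "inj_on ((!) [P, Q, R]) {..<3}"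
    using assms(1,2) by (intro inj_on_nth; simp)+
  show "\<forall>j<3. [P, Q, R] ! j < k"
    "\<forall>j<3. [x, y, z] ! j \<in> Vs ([P, Q, R] ! ((j + 3 - 1) mod 3)) \<inter> Vs ([P, Q, R] ! j)"
    using assms(3-) by (simp_all add: all_less_3)
qed

lemma has_cluster_cycle_4I:
  assumes "distinct [x, y, z, u]" "distinct [P, Q, R, S]" "P < k" "Q < k" "R < k" "S < k"
    "{x, y} \<subseteq> Vs P" "{y, z} \<subseteq> Vs Q" "{z, u} \<subseteq> Vs R" "{u, x} \<subseteq> Vs S"
  shows "has_cluster_cycle k Vs 4"
  unfolding has_cluster_cycle_def
proof (intro exI conjI)
  show "inj_on ((!) [x, y, z, u]) {..<4}" "inj_on ((!) [P, Q, R, S]) {..<4}"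
    using assms(1,2) by (intro inj_on_nth; simp)+
  show "\<forall>j<4. [P, Q, R, S] ! j < k"
    "\<forall>j<4. [x, y, z, u] ! j \<in> Vs ([P, Q, R, S] ! ((j + 4 - 1) mod 4)) \<inter> Vs ([P, Q, R, S] ! j)"
    using assms(3-) by (simp_all add: all_less_4)
qed

locale cluster_graph =
  fixes V :: "'a set" and E :: "'a set set" and k :: nat and Vs :: "nat \<Rightarrow> 'a set"
  assumes simple: "simple_graph V E" and cluster: "graph_cluster V E k Vs"
begin

lemma finite_vertices: "finite V"
  using simple by (simp add: simple_graph_def)

lemma part_subset: "i < k \<Longrightarrow> Vs i \<subseteq> V"
  using cluster unfolding graph_cluster_def by blast

lemma finite_part: "i < k \<Longrightarrow> finite (Vs i)"
  using finite_vertices part_subset by (rule finite_subset[rotated])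

lemma UN_parts: "(\<Union>i<k. Vs i) = V"
  using cluster by (simp add: graph_cluster_def)

lemma vertex_in_part: "v \<in> V \<Longrightarrow> \<exists>i<k. v \<in> Vs i"
  using UN_parts by blast

lemma edge_in_part: "e \<in> E \<Longrightarrow> \<exists>i<k. e \<subseteq> Vs i"
proof -
  assume "e \<in> E"
  moreover have "E = (\<Union>i<k. induced_edges E (Vs i))"
    using cluster by (simp add: graph_cluster_def)
  ultimately show ?thesis by (auto simp: induced_edges_def)
qed

lemma edge_endpoints: "{a, b} \<in> E \<Longrightarrow> a \<noteq> b \<and> a \<in> V \<and> b \<in> V"
  using simple unfolding simple_graph_def by (metis doubleton_eq_iff)

lemma part_eq_if_two_common:
  assumes "i < k" "j < k" "a \<noteq> b" "{a, b} \<subseteq> Vs i" "{a, b} \<subseteq> Vs j"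
  shows "i = j"
proof (rule ccontr)
  assume "i \<noteq> j"
  then have "card (Vs i \<inter> Vs j) \<le> 1"
    using cluster assms(1,2) by (simp add: graph_cluster_def)
  moreover have "card {a, b} \<le> card (Vs i \<inter> Vs j)"
    using assms(1,4,5) finite_part by (intro card_mono) auto
  ultimately show False using assms(3) by simp
qed

end

locale cluster_graph_girth_4 = cluster_graph +
  assumes no_3_cycle: "\<not> has_cluster_cycle k Vs 3"
begin

lemma triangle_in_one_part:
  assumes "distinct [x, y, z]" "P < k" "Q < k" "R < k"
    "{x, y} \<subseteq> Vs P" "{y, z} \<subseteq> Vs Q" "{z, x} \<subseteq> Vs R"
  shows "P = Q \<and> Q = R"
proof (rule ccontr)
  assume not_all: "\<not> (P = Q \<and> Q = R)"
  have "P \<noteq> Q" "Q \<noteq> R" "R \<noteq> P"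
    using part_eq_if_two_common[of P R z x] part_eq_if_two_common[of Q P x y]
      part_eq_if_two_common[of R Q y z] assms not_all by auto
  then show False
    using has_cluster_cycle_3I[of x y z P Q R] assms no_3_cycle by auto
qed

end

locale cluster_graph_girth_5 = cluster_graph_girth_4 +
  assumes no_4_cycle: "\<not> has_cluster_cycle k Vs 4"
begin

lemma square_in_one_part:
  assumes "distinct [x, y, z, u]" "P < k" "Q < k" "R < k" "S < k"
    "{x, y} \<subseteq> Vs P" "{y, z} \<subseteq> Vs Q" "{z, u} \<subseteq> Vs R" "{u, x} \<subseteq> Vs S"
  shows "P = Q \<and> Q = R \<and> R = S"
proof (rule ccontr)
  assume not_all: "\<not> (P = Q \<and> Q = R \<and> R = S)"
  have "P \<noteq> Q"
  proof
    assume "P = Q"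
    with assms have "P = R \<and> R = S" by (intro triangle_in_one_part[of x z u]) auto
    with \<open>P = Q\<close> not_all show False by simp
  qed
  moreover have "Q \<noteq> R"
  proof
    assume "Q = R"
    with assms have "Q = S \<and> S = P" by (intro triangle_in_one_part[of y u x]) auto
    with \<open>Q = R\<close> not_all show False by simp
  qed
  moreover have "R \<noteq> S"
  proof
    assume "R = S"
    with assms have "R = P \<and> P = Q" by (intro triangle_in_one_part[of z x y]) auto
    with \<open>R = S\<close> not_all show False by simp
  qed
  moreover have "S \<noteq> P"
  proof
    assume "S = P"
    with assms have "S = Q \<and> Q = R" by (intro triangle_in_one_part[of u y z]) auto
    with \<open>S = P\<close> not_all show False by simp
  qed
  moreover have "P \<noteq> R" "Q \<noteq> S"
    using part_eq_if_two_common[of P Q y z] part_eq_if_two_common[of P Q x y] assms \<open>P \<noteq> Q\<close>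
    by auto
  ultimately show False
    using has_cluster_cycle_4I[of x y z u P Q R S] assms no_4_cycle by auto
qed

end

lemma simplicial_complex_clique_complex: "finite W \<Longrightarrow> simplicial_complex (clique_complex W F)"
proof -
  assume W: "finite W"
  have "clique_complex W F \<subseteq> Pow W"
    by (auto simp: clique_complex_def)
  then have "finite (clique_complex W F)"
    using W by (meson finite_Pow_iff finite_subset)
  moreover have "finite \<sigma> \<and> \<sigma> \<noteq> {}" if "\<sigma> \<in> clique_complex W F" for \<sigma>
    using that by (simp add: clique_complex_def)
  moreover have "\<tau> \<in> clique_complex W F"
    if \<sigma>: "\<sigma> \<in> clique_complex W F" and "\<tau> \<subseteq> \<sigma>" "\<tau> \<noteq> {}" for \<sigma> \<tau>
  proof -
    have "finite \<tau>"
      using \<sigma> finite_subset[OF \<open>\<tau> \<subseteq> \<sigma>\<close>] by (simp add: clique_complex_def)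
    then show ?thesis
      using that unfolding clique_complex_def by auto
  qed
  ultimately show ?thesis
    unfolding simplicial_complex_def by blast
qed

lemma cverts_clique_complex: "cverts (clique_complex W F) = W"
  unfolding cverts_def
proof (intro equalityI subsetI)
  fix x assume "x \<in> \<Union>(clique_complex W F)"
  then show "x \<in> W" by (auto simp: clique_complex_def)
next
  fix x assume "x \<in> W"
  then have "{x} \<in> clique_complex W F" by (simp add: clique_complex_def)
  then show "x \<in> \<Union>(clique_complex W F)" by blast
qed

lemma nbhd_complex_face_subset: "\<sigma> \<in> nbhd_complex W F \<Longrightarrow> \<sigma> \<subseteq> W"
  by (auto simp: nbhd_complex_def closed_nbhd_def)

lemma singleton_in_nbhd_complex: "x \<in> W \<Longrightarrow> {x} \<in> nbhd_complex W F"
  by (auto simp: nbhd_complex_def closed_nbhd_def)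

lemma cverts_nbhd_complex: "cverts (nbhd_complex W F) = W"
  unfolding cverts_def
proof (intro equalityI subsetI)
  fix x assume "x \<in> \<Union>(nbhd_complex W F)"
  then obtain \<sigma> where "\<sigma> \<in> nbhd_complex W F" "x \<in> \<sigma>" by (rule UnionE)
  then show "x \<in> W" by (rule subsetD[OF nbhd_complex_face_subset])
next
  fix x assume "x \<in> W"
  then show "x \<in> \<Union>(nbhd_complex W F)"
    by (intro UnionI[OF singleton_in_nbhd_complex]) simp_all
qed

lemma simplicial_complex_nbhd_complex: "finite W \<Longrightarrow> simplicial_complex (nbhd_complex W F)"
proof -
  assume W: "finite W"
  have "nbhd_complex W F \<subseteq> Pow W"
    using nbhd_complex_face_subset by blast
  then have "finite (nbhd_complex W F)"
    using W by (meson finite_Pow_iff finite_subset)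
  moreover have "finite \<sigma> \<and> \<sigma> \<noteq> {}" if "\<sigma> \<in> nbhd_complex W F" for \<sigma>
    using finite_subset[OF nbhd_complex_face_subset[OF that] W] that
    by (simp add: nbhd_complex_def)
  moreover have "\<tau> \<in> nbhd_complex W F"
    if "\<sigma> \<in> nbhd_complex W F" "\<tau> \<subseteq> \<sigma>" "\<tau> \<noteq> {}" for \<sigma> \<tau>
    using that unfolding nbhd_complex_def by blast
  ultimately show ?thesis
    unfolding simplicial_complex_def by blast
qed

lemma complex_iso_refl: "complex_iso K K"
  unfolding complex_iso_def by (intro exI[of _ id]) auto

context cluster_graph
begin

lemma complex_cluster_UN_parts:
  assumes complex: "\<And>i. i < k \<Longrightarrow> simplicial_complex (K i)"
    and verts: "\<And>i. i < k \<Longrightarrow> cverts (K i) = Vs i"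
    and singletons: "\<And>i v. i < k \<Longrightarrow> v \<in> Vs i \<Longrightarrow> {v} \<in> K i"
  shows "complex_cluster (\<Union>i<k. K i) k K"
    and "shape (cverts (\<Union>i<k. K i)) k (\<lambda>i. cverts (K i)) = shape V k Vs"
proof -
  have "cverts (\<Union>i<k. K i) = (\<Union>i<k. cverts (K i))"
    unfolding cverts_def by blast
  also have "\<dots> = V"
    using verts UN_parts by simp
  finally show "shape (cverts (\<Union>i<k. K i)) k (\<lambda>i. cverts (K i)) = shape V k Vs"
    unfolding shape_def using verts by simp
  have induced: "induced_subcomplex (K i) (\<Union>i<k. K i)" if i: "i < k" for i
    unfolding induced_subcomplex_def
  proof (intro conjI ballI impI)
    show "K i \<subseteq> (\<Union>i<k. K i)" using i by blast
    fix \<sigma> assume "\<sigma> \<in> (\<Union>i<k. K i)" and \<sigma>_i: "\<sigma> \<subseteq> cverts (K i)"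
    then obtain j where j: "j < k" "\<sigma> \<in> K j" by blast
    show "\<sigma> \<in> K i"
    proof (cases "j = i")
      case False
      have "\<sigma> \<subseteq> Vs j" "\<sigma> \<subseteq> Vs i"
        using j \<sigma>_i verts[of j] verts[OF i] unfolding cverts_def by auto
      moreover obtain s where "s \<in> \<sigma>"
        using complex[OF j(1)] j(2) unfolding simplicial_complex_def by blast
      ultimately have "\<sigma> = {s}"
        using part_eq_if_two_common[OF i j(1)] False by blast
      then show ?thesis using singletons i \<open>\<sigma> \<subseteq> Vs i\<close> by auto
    qed (use j in simp)
  qed
  have "finite (\<Union>i<k. K i)"
    using complex by (simp add: simplicial_complex_def)
  then have "simplicial_complex (\<Union>i<k. K i)"
    using complex unfolding simplicial_complex_def by blast
  moreover have "card (cverts (K i) \<inter> cverts (K j)) \<le> 1" if "i < k" "j < k" "i \<noteq> j" for i j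
    using that verts cluster by (simp add: graph_cluster_def)
  ultimately show "complex_cluster (\<Union>i<k. K i) k K"
    unfolding complex_cluster_def using complex induced by simp
qed

end

section \<open>Clique complexes of clusters\<close>

context cluster_graph_girth_4
begin

lemma clique_in_part:
  assumes "\<sigma> \<in> clique_complex V E"
  obtains i where "i < k" "\<sigma> \<subseteq> Vs i"
proof (cases "\<exists>a\<in>\<sigma>. \<exists>b\<in>\<sigma>. a \<noteq> b")
  case True
  have clique: "\<And>u v. u \<in> \<sigma> \<Longrightarrow> v \<in> \<sigma> \<Longrightarrow> u \<noteq> v \<Longrightarrow> {u, v} \<in> E"
    using assms by (simp add: clique_complex_def)
  obtain a b where ab: "a \<in> \<sigma>" "b \<in> \<sigma>" "a \<noteq> b" using True by blast
  then obtain i where i: "i < k" "{a, b} \<subseteq> Vs i"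
    using clique edge_in_part by blast
  have "c \<in> Vs i" if c: "c \<in> \<sigma>" "c \<noteq> a" "c \<noteq> b" for c
  proof -
    obtain p where p: "p < k" "{c, a} \<subseteq> Vs p"
      using edge_in_part[OF clique[OF c(1) ab(1) c(2)]] by blast
    obtain q where q: "q < k" "{b, c} \<subseteq> Vs q"
      using edge_in_part[OF clique[OF ab(2) c(1) c(3)[symmetric]]] by blast
    have "distinct [a, b, c]"
      using ab c by simp
    then have "i = q"
      using triangle_in_one_part[of a b c i q p] i p q by simp
    with q show ?thesis by simp
  qed
  then show ?thesis using that i by blast
next
  case False
  have "\<sigma> \<noteq> {}" "\<sigma> \<subseteq> V"
    using assms by (simp_all add: clique_complex_def)
  then obtain s where "s \<in> \<sigma>" "s \<in> V" by blast
  moreover from False \<open>s \<in> \<sigma>\<close> have "\<sigma> = {s}" by blast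
  ultimately show ?thesis using that vertex_in_part by blast
qed

lemma clique_complex_eq_UN_parts:
  "clique_complex V E = (\<Union>i<k. clique_complex (Vs i) (induced_edges E (Vs i)))"
proof (intro equalityI subsetI)
  fix \<sigma> assume \<sigma>: "\<sigma> \<in> clique_complex V E"
  then obtain i where "i < k" "\<sigma> \<subseteq> Vs i" by (rule clique_in_part)
  with \<sigma> show "\<sigma> \<in> (\<Union>i<k. clique_complex (Vs i) (induced_edges E (Vs i)))"
    by (auto simp: clique_complex_def induced_edges_def)
next
  fix \<sigma> assume "\<sigma> \<in> (\<Union>i<k. clique_complex (Vs i) (induced_edges E (Vs i)))"
  then show "\<sigma> \<in> clique_complex V E"
    using part_subset by (auto simp: clique_complex_def induced_edges_def)
qed

lemma clique_complex_cluster: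
  "\<exists>X. complex_cluster X k (\<lambda>i. clique_complex (Vs i) (induced_edges E (Vs i))) \<and>
       shape (cverts X) k (\<lambda>i. cverts (clique_complex (Vs i) (induced_edges E (Vs i))))
         = shape V k Vs \<and>
       complex_iso (clique_complex V E) X"
proof -
  let ?K = "\<lambda>i. clique_complex (Vs i) (induced_edges E (Vs i))"
  have complex: "simplicial_complex (?K i)" if "i < k" for i
    using finite_part[OF that] by (rule simplicial_complex_clique_complex)
  have verts: "cverts (?K i) = Vs i" for i
    by (rule cverts_clique_complex)
  have singletons: "{v} \<in> ?K i" if "v \<in> Vs i" for i v
    using that by (simp add: clique_complex_def)
  note cluster = complex_cluster_UN_parts[OF complex verts singletons]
  show ?thesis
    unfolding clique_complex_eq_UN_parts
    by (intro exI[of _ "\<Union>i<k. ?K i"] conjI cluster complex_iso_refl)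
qed

end

section \<open>Geometric realizations\<close>

definition realization_points :: "'a set \<Rightarrow> 'a set set \<Rightarrow> ('a \<Rightarrow> real) set" where
  "realization_points W K =
     {f \<in> extensional W. (\<forall>v\<in>W. 0 \<le> f v) \<and> sum f W = 1 \<and> support_on W f \<in> K}"

lemma realization_eq_subtopology:
  "cverts K = W \<Longrightarrow> realization K = subtopology (powertop_real W) (realization_points W K)"
  by (simp add: realization_def realization_points_def support_on_def)

lemma topspace_realization_points:
  "topspace (subtopology (powertop_real W) (realization_points W K)) = realization_points W K"
  by (auto simp: realization_points_def PiE_def)

lemma realization_points_mono: "K \<subseteq> L \<Longrightarrow> realization_points W K \<subseteq> realization_points W L"
  unfolding realization_points_def by blast

lemma support_on_nonempty_if_sum_eq_1:
  assumes "sum f W = (1::real)"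
  shows "support_on W f \<noteq> {}"
proof
  assume "support_on W f = {}"
  then have "sum f W = 0"
    by (intro sum.neutral) (auto simp: support_on_def)
  with assms show False by simp
qed

lemma convex_combination_in_realization_points:
  assumes K: "simplicial_complex K" and x: "x \<in> realization_points W K"
    and y: "y \<in> realization_points W K"
    and xy: "support_on W x \<union> support_on W y \<in> K" and t: "0 \<le> t" "t \<le> 1"
  shows "(\<lambda>u\<in>W. (1 - t) * y u + t * x u) \<in> realization_points W K"
proof -
  let ?z = "\<lambda>u\<in>W. (1 - t) * y u + t * x u"
  have "sum ?z W = (1 - t) * sum y W + t * sum x W"
    by (simp add: sum.distrib sum_distrib_left)
  then have sum: "sum ?z W = 1"
    using x y by (simp add: realization_points_def)
  have nonneg: "\<forall>u\<in>W. 0 \<le> ?z u"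
    using x y t by (simp add: realization_points_def)
  have "support_on W ?z \<subseteq> support_on W x \<union> support_on W y"
    by (auto simp: support_on_def)
  then have "support_on W ?z \<in> K"
    using K xy support_on_nonempty_if_sum_eq_1[OF sum] unfolding simplicial_complex_def by blast
  with sum nonneg show ?thesis
    by (simp add: realization_points_def)
qed

lemma homotopic_with_id_straight_line:
  assumes cont: "continuous_map (subtopology (powertop_real W) A) (powertop_real W) f"
    and ext: "A \<subseteq> extensional W"
    and segments: "\<And>x t. x \<in> A \<Longrightarrow> 0 \<le> t \<Longrightarrow> t \<le> 1 \<Longrightarrow>
      (\<lambda>u\<in>W. (1 - t) * f x u + t * x u) \<in> A"
  shows "homotopic_with (\<lambda>_. True) (subtopology (powertop_real W) A)
           (subtopology (powertop_real W) A) f id"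
proof -
  let ?X = "subtopology (powertop_real W) A"
  let ?Z = "prod_topology (top_of_set {0..1::real}) ?X"
  define h where "h z = (\<lambda>u\<in>W. (1 - fst z) * f (snd z) u + fst z * snd z u)" for z
  have top: "topspace ?X = A"
    using ext by (auto simp: PiE_def)
  have f_ext: "f x \<in> extensional W" if "x \<in> A" for x
    using continuous_map_image_subset_topspace[OF cont] that top by (auto simp: PiE_def)
  have fst: "continuous_map ?Z euclideanreal fst"
    using continuous_map_fst by (rule continuous_map_into_fulltopology)
  have coordinate: "continuous_map ?Z euclideanreal (\<lambda>z. h z u)" if u: "u \<in> W" for u
  proof -
    have "continuous_map ?Z euclideanreal (\<lambda>z. f (snd z) u)"
      using continuous_map_compose[OF continuous_map_snd
          continuous_map_compose[OF cont continuous_map_product_projection[OF u]]]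
      by (simp add: comp_def)
    moreover have "continuous_map ?Z euclideanreal (\<lambda>z. snd z u)"
      using continuous_map_compose[OF continuous_map_snd
          continuous_map_from_subtopology[OF continuous_map_product_projection[OF u]]]
      by (simp add: comp_def)
    ultimately have "continuous_map ?Z euclideanreal
        (\<lambda>z. (1 - fst z) * f (snd z) u + fst z * snd z u)"
      using fst by (intro continuous_map_add continuous_map_real_mult continuous_map_diff
          continuous_map_canonical_const)
    then show ?thesis
      using u by (simp add: h_def)
  qed
  have "h z \<in> A" if "z \<in> topspace ?Z" for z
    using that segments top by (cases z) (simp add: h_def)
  moreover have "h z \<in> extensional W" for z
    by (simp add: h_def)
  ultimately have "continuous_map ?Z ?X h"
    unfolding continuous_map_in_subtopology continuous_map_componentwise
    using coordinate by blast
  then have "homotopic_with (\<lambda>_. True) ?X ?X (\<lambda>x. h (0, x)) (\<lambda>x. h (1, x))"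
    unfolding homotopic_with_def by (intro exI[of _ h]) simp
  then show ?thesis
    by (rule homotopic_with_eq)
      (use top f_ext ext in \<open>auto simp: h_def extensional_restrict\<close>)
qed

lemma continuous_map_Max_insert:
  assumes "finite S" "\<And>s. s \<in> S \<Longrightarrow> continuous_map X euclideanreal (f s)"
  shows "continuous_map X euclideanreal (\<lambda>x. Max (insert c ((\<lambda>s. f s x) ` S)))"
  using assms
proof (induction S rule: finite_induct)
  case (insert s S)
  have "Max (insert c ((\<lambda>s. f s x) ` insert s S)) = max (f s x) (Max (insert c ((\<lambda>s. f s x) ` S)))"
    for x
  proof -
    have "insert c ((\<lambda>s. f s x) ` insert s S) = insert (f s x) (insert c ((\<lambda>s. f s x) ` S))"
      by auto
    then show ?thesis using insert.hyps(1) by simp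
  qed
  then show ?case using insert by (simp add: continuous_map_real_max)
qed simp

section \<open>Closed neighbourhood complexes of clusters\<close>

context cluster_graph
begin

abbreviation nbhd_cluster :: "'a set set" where
  "nbhd_cluster \<equiv> \<Union>i<k. nbhd_complex (Vs i) (induced_edges E (Vs i))"

lemma cverts_nbhd_cluster: "cverts nbhd_cluster = V"
proof -
  have "cverts nbhd_cluster = (\<Union>i<k. cverts (nbhd_complex (Vs i) (induced_edges E (Vs i))))"
    unfolding cverts_def by blast
  also have "\<dots> = V"
    using UN_parts by (simp add: cverts_nbhd_complex)
  finally show ?thesis .
qed

lemma nbhd_cluster_subset: "nbhd_cluster \<subseteq> nbhd_complex V E"
proof
  fix \<sigma> assume "\<sigma> \<in> nbhd_cluster"
  then obtain i w where "i < k" "w \<in> Vs i" "\<sigma> \<noteq> {}"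
    "\<sigma> \<subseteq> closed_nbhd (Vs i) (induced_edges E (Vs i)) w"
    by (auto simp: nbhd_complex_def)
  then show "\<sigma> \<in> nbhd_complex V E"
    using part_subset unfolding nbhd_complex_def closed_nbhd_def induced_edges_def by blast
qed

definition crossing :: "'a \<Rightarrow> 'a \<Rightarrow> 'a \<Rightarrow> bool" where
  "crossing v a b \<longleftrightarrow> {v, a} \<in> E \<and> {v, b} \<in> E \<and>
     (\<exists>i<k. \<exists>j<k. i \<noteq> j \<and> {v, a} \<subseteq> Vs i \<and> {v, b} \<subseteq> Vs j)"

lemma crossing_distinct:
  assumes "crossing v a b"
  shows "a \<noteq> b \<and> a \<noteq> v \<and> b \<noteq> v \<and> a \<in> V \<and> b \<in> V \<and> v \<in> V"
proof -
  obtain i j where "i < k" "j < k" "i \<noteq> j" "{v, a} \<subseteq> Vs i" "{v, b} \<subseteq> Vs j"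
    using assms by (auto simp: crossing_def)
  moreover have "v \<noteq> a \<and> v \<in> V \<and> a \<in> V" "v \<noteq> b \<and> b \<in> V"
    using assms edge_endpoints by (auto simp: crossing_def)
  ultimately show ?thesis
    using part_eq_if_two_common[of i j v a] by auto
qed

lemma nbhd_face_in_cluster:
  assumes "S \<noteq> {}" "S \<subseteq> closed_nbhd V E v" "v \<in> V"
    and no_crossing: "\<forall>a\<in>S. \<forall>b\<in>S. \<not> crossing v a b"
  shows "S \<in> nbhd_cluster"
proof -
  have edge: "{v, b} \<in> E" if "b \<in> S" "b \<noteq> v" for b
    using assms(2) that by (auto simp: closed_nbhd_def)
  obtain j where j: "j < k" "v \<in> Vs j" and S_j: "\<forall>b\<in>S - {v}. {v, b} \<subseteq> Vs j"
  proof (cases "S \<subseteq> {v}")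
    case True
    then show ?thesis using that vertex_in_part[OF assms(3)] by auto
  next
    case False
    then obtain a where a: "a \<in> S" "a \<noteq> v" by auto
    then obtain j where j: "j < k" "{v, a} \<subseteq> Vs j"
      using edge edge_in_part by blast
    have "{v, b} \<subseteq> Vs j" if b: "b \<in> S" "b \<noteq> v" for b
    proof -
      obtain j' where "j' < k" "{v, b} \<subseteq> Vs j'"
        using edge b edge_in_part by blast
      moreover have "\<not> crossing v a b"
        using no_crossing a b by blast
      ultimately show ?thesis
        using j edge a b unfolding crossing_def by blast
    qed
    then show ?thesis using that j by blast
  qed
  have "S \<subseteq> closed_nbhd (Vs j) (induced_edges E (Vs j)) v"
    using S_j edge by (auto simp: closed_nbhd_def induced_edges_def)
  then show ?thesis
    using j assms(1) by (auto simp: nbhd_complex_def)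
qed

definition crossing_weight :: "'a \<Rightarrow> ('a \<Rightarrow> real) \<Rightarrow> real" where
  "crossing_weight v x =
     Max (insert 0 ((\<lambda>(a, b). min (x a) (x b)) ` {(a, b). crossing v a b}))"

lemma finite_crossing_pairs: "finite {(a, b). crossing v a b}"
proof (rule finite_subset)
  show "{(a, b). crossing v a b} \<subseteq> V \<times> V"
    using crossing_distinct by auto
qed (simp add: finite_vertices)

lemma crossing_weight_nonneg: "0 \<le> crossing_weight v x"
  unfolding crossing_weight_def using finite_crossing_pairs by simp

lemma crossing_weight_ge: "crossing v a b \<Longrightarrow> min (x a) (x b) \<le> crossing_weight v x"
  unfolding crossing_weight_def using finite_crossing_pairs
  by (intro Max_ge) (auto simp: image_iff)

lemma crossing_weight_eq_0I:
  assumes "\<forall>a\<in>support_on V x. \<forall>b\<in>support_on V x. \<not> crossing v a b"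
  shows "crossing_weight v x = 0"
proof (rule ccontr)
  assume "crossing_weight v x \<noteq> 0"
  then have pos: "0 < crossing_weight v x"
    using crossing_weight_nonneg[of v x] by simp
  have "crossing_weight v x \<in> insert 0 ((\<lambda>(a, b). min (x a) (x b)) ` {(a, b). crossing v a b})"
    unfolding crossing_weight_def using finite_crossing_pairs by (intro Max_in) auto
  then obtain a b where ab: "crossing v a b" "0 < min (x a) (x b)"
    using pos by auto
  moreover have "a \<in> V" "b \<in> V"
    using crossing_distinct[OF ab(1)] by simp_all
  ultimately show False
    using assms by (auto simp: support_on_def)
qed

lemma continuous_map_crossing_weight:
  "continuous_map (subtopology (powertop_real V) A) euclideanreal (crossing_weight v)"
proof -
  have "continuous_map (subtopology (powertop_real V) A) euclideanreal (\<lambda>x. min (x a) (x b))"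
    if "(a, b) \<in> {(a, b). crossing v a b}" for a b
    using that crossing_distinct by (intro continuous_intros) auto
  then show ?thesis
    unfolding crossing_weight_def[abs_def]
    using continuous_map_Max_insert[OF finite_crossing_pairs,
        where f = "\<lambda>p x. case p of (a, b) \<Rightarrow> min (x a) (x b)"]
    by (auto simp: case_prod_beta')
qed

definition neighbours :: "'a \<Rightarrow> 'a set" where
  "neighbours u = {w \<in> V. {u, w} \<in> E}"

lemma finite_neighbours: "finite (neighbours u)"
  unfolding neighbours_def using finite_vertices by simp

text \<open>Every vertex \<open>u\<close> hands the weight \<open>min (x u) c\<^sub>w\<close> to each neighbour \<open>w\<close>, where
  \<open>c\<^sub>w\<close> is the crossing weight at \<open>w\<close>; for a point over \<open>N[v]\<close> only \<open>c\<^sub>v\<close> can be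
  nonzero.\<close>

definition uncross :: "('a \<Rightarrow> real) \<Rightarrow> 'a \<Rightarrow> real" where
  "uncross x = (\<lambda>u\<in>V. x u - (\<Sum>w\<in>neighbours u. min (x u) (crossing_weight w x))
                             + (\<Sum>a\<in>neighbours u. min (x a) (crossing_weight u x)))"

lemma uncross_eq_self:
  assumes "x \<in> extensional V" "\<forall>u\<in>V. 0 \<le> x u" "\<forall>w\<in>V. crossing_weight w x = 0"
  shows "uncross x = x"
proof -
  have "uncross x u = x u" if "u \<in> V" for u
    using assms(2,3) that
    by (auto simp: uncross_def neighbours_def intro!: sum.neutral)
  then show ?thesis
    using assms(1) by (auto simp: uncross_def extensional_def)
qed

lemma continuous_map_uncross:
  "continuous_map (subtopology (powertop_real V) A) (powertop_real V) uncross"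
  unfolding continuous_map_componentwise
proof (intro conjI ballI)
  fix u assume u: "u \<in> V"
  have "continuous_map (subtopology (powertop_real V) A) euclideanreal
     (\<lambda>x. x u - (\<Sum>w\<in>neighbours u. min (x u) (crossing_weight w x))
            + (\<Sum>a\<in>neighbours u. min (x a) (crossing_weight u x)))"
    using u by (intro continuous_intros continuous_map_crossing_weight finite_neighbours)
      (auto simp: neighbours_def)
  then show "continuous_map (subtopology (powertop_real V) A) euclideanreal (\<lambda>x. uncross x u)"
    using u by (simp add: uncross_def)
qed (auto simp: uncross_def)

end

context cluster_graph_girth_4
begin

lemma not_crossing_in_part: "i < k \<Longrightarrow> {a, b} \<subseteq> Vs i \<Longrightarrow> \<not> crossing v a b"
proof
  assume i: "i < k" "{a, b} \<subseteq> Vs i" and "crossing v a b"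
  then obtain p q where "p < k" "q < k" "p \<noteq> q" "{v, a} \<subseteq> Vs p" "{v, b} \<subseteq> Vs q"
    by (auto simp: crossing_def)
  then show False
    using triangle_in_one_part[of a b v i q p] i crossing_distinct[OF \<open>crossing v a b\<close>] by auto
qed

lemma uncross_fixes_cluster:
  assumes "x \<in> realization_points V nbhd_cluster"
  shows "uncross x = x"
proof -
  obtain i where "i < k" "support_on V x \<in> nbhd_complex (Vs i) (induced_edges E (Vs i))"
    using assms by (auto simp: realization_points_def)
  then have "support_on V x \<subseteq> Vs i" and "i < k"
    by (simp_all add: nbhd_complex_face_subset)
  then have "\<forall>w\<in>V. crossing_weight w x = 0"
    by (intro ballI crossing_weight_eq_0I not_crossing_in_part[OF \<open>i < k\<close>]) auto
  then show ?thesis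
    using assms by (intro uncross_eq_self) (auto simp: realization_points_def)
qed

end

context cluster_graph_girth_5
begin

lemma crossing_centre_unique:
  assumes "crossing v a b" "{a, b} \<subseteq> closed_nbhd V E w"
  shows "w = v"
proof (rule ccontr)
  assume "w \<noteq> v"
  obtain i j where ij: "i < k" "j < k" "i \<noteq> j" "{v, a} \<subseteq> Vs i" "{v, b} \<subseteq> Vs j"
    using assms(1) by (auto simp: crossing_def)
  have distinct: "a \<noteq> b" "a \<noteq> v" "b \<noteq> v" "a \<in> V" "b \<in> V"
    using crossing_distinct[OF assms(1)] by auto
  have "{a, b} \<notin> E"
    using edge_in_part not_crossing_in_part assms(1) by blast
  then have "w \<noteq> a" "w \<noteq> b" "{w, a} \<in> E" "{w, b} \<in> E"
    using assms(2) distinct by (auto simp: closed_nbhd_def insert_commute)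
  then obtain p q where "p < k" "{a, w} \<subseteq> Vs p" "q < k" "{w, b} \<subseteq> Vs q"
    using edge_in_part by (metis insert_commute)
  then show False
    using square_in_one_part[of v a w b i p q j] ij distinct \<open>w \<noteq> v\<close> \<open>w \<noteq> a\<close> \<open>w \<noteq> b\<close>
    by (auto simp: insert_commute)
qed

lemma crossing_weight_eq_0_off_centre:
  "support_on V x \<subseteq> closed_nbhd V E v \<Longrightarrow> w \<noteq> v \<Longrightarrow> crossing_weight w x = 0"
  using crossing_centre_unique by (intro crossing_weight_eq_0I) blast

lemma uncross_apply:
  assumes support: "support_on V x \<subseteq> closed_nbhd V E v" and "v \<in> V"
    and nonneg: "\<forall>u\<in>V. 0 \<le> x u" and u: "u \<in> V"
  shows "uncross x u =
           x u - (if {v, u} \<in> E then min (x u) (crossing_weight v x) else 0)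
             + (if u = v then \<Sum>a\<in>neighbours v. min (x a) (crossing_weight v x) else 0)"
proof -
  have off: "crossing_weight w x = 0" if "w \<noteq> v" for w
    using crossing_weight_eq_0_off_centre[OF support that] .
  have "(\<Sum>w\<in>neighbours u. min (x u) (crossing_weight w x)) =
        (\<Sum>w\<in>neighbours u. if w = v then min (x u) (crossing_weight v x) else 0)"
    using off nonneg u by (intro sum.cong) auto
  also have "\<dots> = (if v \<in> neighbours u then min (x u) (crossing_weight v x) else 0)"
    using finite_neighbours by simp
  also have "\<dots> = (if {v, u} \<in> E then min (x u) (crossing_weight v x) else 0)"
    using \<open>v \<in> V\<close> by (simp add: neighbours_def insert_commute)
  finally have given: "(\<Sum>w\<in>neighbours u. min (x u) (crossing_weight w x)) = \<dots>" .
  have "(\<Sum>a\<in>neighbours u. min (x a) (crossing_weight u x)) =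
        (if u = v then \<Sum>a\<in>neighbours v. min (x a) (crossing_weight v x) else 0)"
    using off nonneg by (auto simp: neighbours_def intro!: sum.neutral)
  with given show ?thesis
    using u by (simp add: uncross_def)
qed

lemma sum_uncross:
  assumes "support_on V x \<subseteq> closed_nbhd V E v" "v \<in> V" "\<forall>u\<in>V. 0 \<le> x u"
  shows "sum (uncross x) V = sum x V"
proof -
  let ?c = "crossing_weight v x"
  have "sum (uncross x) V =
        sum x V - (\<Sum>u\<in>V. if {v, u} \<in> E then min (x u) ?c else 0)
          + (\<Sum>u\<in>V. if u = v then \<Sum>a\<in>neighbours v. min (x a) ?c else 0)"
    using uncross_apply[OF assms] by (simp add: sum.distrib sum_subtractf)
  also have "\<dots> = sum x V"
    using finite_vertices assms(2) by (simp add: neighbours_def sum.inter_filter)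
  finally show ?thesis .
qed

lemma uncross_nonneg:
  assumes "support_on V x \<subseteq> closed_nbhd V E v" "v \<in> V" "\<forall>u\<in>V. 0 \<le> x u" "u \<in> V"
  shows "0 \<le> uncross x u"
proof -
  have "0 \<le> (\<Sum>a\<in>neighbours v. min (x a) (crossing_weight v x))"
    using assms(3) crossing_weight_nonneg by (intro sum_nonneg) (auto simp: neighbours_def)
  then show ?thesis
    using uncross_apply[OF assms] assms(3,4) by auto
qed

text \<open>Only weight above the crossing weight \<open>c\<close> at \<open>v\<close> survives on the neighbours of \<open>v\<close>, so no
  crossing pair at \<open>v\<close> is left in the support.\<close>

lemma support_uncross:
  assumes support: "support_on V x \<subseteq> closed_nbhd V E v" and v: "v \<in> V"
    and nonneg: "\<forall>u\<in>V. 0 \<le> x u"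
  shows "support_on V (uncross x) \<subseteq> closed_nbhd V E v"
    and "\<forall>a\<in>support_on V (uncross x). \<forall>b\<in>support_on V (uncross x). \<not> crossing v a b"
proof -
  let ?c = "crossing_weight v x"
  have survives: "{v, u} \<in> E \<and> ?c < x u" if "u \<in> support_on V (uncross x)" "u \<noteq> v" for u
  proof (cases "{v, u} \<in> E")
    case True
    then show ?thesis
      using that uncross_apply[OF support v nonneg] by (auto simp: support_on_def min_def split: if_splits)
  next
    case False
    then have "u \<in> support_on V x"
      using that uncross_apply[OF support v nonneg] by (auto simp: support_on_def)
    then show ?thesis using support False that(2) by (auto simp: closed_nbhd_def)
  qed
  then show "support_on V (uncross x) \<subseteq> closed_nbhd V E v"
    by (auto simp: closed_nbhd_def support_on_def)
  show "\<forall>a\<in>support_on V (uncross x). \<forall>b\<in>support_on V (uncross x). \<not> crossing v a b"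
  proof (intro ballI notI)
    fix a b
    assume ab: "a \<in> support_on V (uncross x)" "b \<in> support_on V (uncross x)" "crossing v a b"
    then have "?c < min (x a) (x b)"
      using survives crossing_distinct by auto
    with crossing_weight_ge[OF ab(3), of x] show False by (simp add: min_le_iff_disj)
  qed
qed

lemma uncross_into_cluster:
  assumes x: "x \<in> realization_points V (nbhd_complex V E)"
  shows "uncross x \<in> realization_points V nbhd_cluster"
    and "support_on V x \<union> support_on V (uncross x) \<in> nbhd_complex V E"
proof -
  have nonneg: "\<forall>u\<in>V. 0 \<le> x u" and sum_x: "sum x V = 1"
    using x by (auto simp: realization_points_def)
  obtain v where v: "v \<in> V" and support: "support_on V x \<subseteq> closed_nbhd V E v"
    using x by (auto simp: realization_points_def nbhd_complex_def)
  have sum_r: "sum (uncross x) V = 1"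
    using sum_uncross[OF support v nonneg] sum_x by simp
  note support_r = support_uncross[OF support v nonneg]
  have "support_on V (uncross x) \<in> nbhd_cluster"
    using support_r v support_on_nonempty_if_sum_eq_1[OF sum_r] by (intro nbhd_face_in_cluster) auto
  then show "uncross x \<in> realization_points V nbhd_cluster"
    using uncross_nonneg[OF support v nonneg] sum_r by (simp add: realization_points_def uncross_def)
  show "support_on V x \<union> support_on V (uncross x) \<in> nbhd_complex V E"
    using support support_r(1) v support_on_nonempty_if_sum_eq_1[OF sum_x]
    by (auto simp: nbhd_complex_def)
qed

lemma nbhd_complex_homotopy_equivalent_cluster:
  "realization (nbhd_complex V E) homotopy_equivalent_space realization nbhd_cluster"
proof -
  let ?N = "realization_points V (nbhd_complex V E)"
  let ?X = "realization_points V nbhd_cluster"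
  have X_N: "?X \<subseteq> ?N"
    using nbhd_cluster_subset by (rule realization_points_mono)
  have "continuous_map (subtopology (powertop_real V) ?N) (subtopology (powertop_real V) ?X) uncross"
    using continuous_map_uncross uncross_into_cluster
    by (auto simp: continuous_map_in_subtopology topspace_realization_points)
  moreover have "continuous_map (subtopology (powertop_real V) ?X) (subtopology (powertop_real V) ?N) id"
    unfolding continuous_map_in_subtopology topspace_realization_points
    using X_N continuous_map_from_subtopology[OF continuous_map_id] by auto
  moreover have "homotopic_with (\<lambda>_. True) (subtopology (powertop_real V) ?N)
      (subtopology (powertop_real V) ?N) uncross id"
  proof (rule homotopic_with_id_straight_line[OF continuous_map_uncross])
    show "?N \<subseteq> extensional V" by (auto simp: realization_points_def)
    fix x and t :: real
    assume x: "x \<in> ?N" and t: "0 \<le> t" "t \<le> 1"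
    from uncross_into_cluster[OF x] show "(\<lambda>u\<in>V. (1 - t) * uncross x u + t * x u) \<in> ?N"
      using x t X_N
      by (intro convex_combination_in_realization_points[OF
            simplicial_complex_nbhd_complex[OF finite_vertices]]) auto
  qed
  ultimately show ?thesis
    unfolding realization_eq_subtopology[OF cverts_nbhd_complex]
      realization_eq_subtopology[OF cverts_nbhd_cluster]
    using uncross_fixes_cluster
    by (intro deformation_retraction_imp_homotopy_equivalent_space[where S = id])
      (auto simp: retraction_maps_def topspace_realization_points)
qed

lemma nbhd_complex_cluster:
  "\<exists>X. complex_cluster X k (\<lambda>i. nbhd_complex (Vs i) (induced_edges E (Vs i))) \<and>
       shape (cverts X) k (\<lambda>i. cverts (nbhd_complex (Vs i) (induced_edges E (Vs i))))
         = shape V k Vs \<and>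
       realization (nbhd_complex V E) homotopy_equivalent_space realization X"
proof -
  let ?K = "\<lambda>i. nbhd_complex (Vs i) (induced_edges E (Vs i))"
  have complex: "simplicial_complex (?K i)" if "i < k" for i
    using finite_part[OF that] by (rule simplicial_complex_nbhd_complex)
  have verts: "cverts (?K i) = Vs i" for i
    by (rule cverts_nbhd_complex)
  have singletons: "{v} \<in> ?K i" if "v \<in> Vs i" for i v
    using that by (rule singleton_in_nbhd_complex)
  note cluster = complex_cluster_UN_parts[OF complex verts singletons]
  show ?thesis
    by (intro exI[of _ "\<Union>i<k. ?K i"] conjI cluster nbhd_complex_homotopy_equivalent_cluster)
qed

end

theorem proposition4p1:
  fixes V :: "'a set" and E :: "'a set set" and k :: nat and Vs :: "nat \<Rightarrow> 'a set"
  assumes "simple_graph V E"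
    and "graph_cluster V E k Vs"
  shows "(cluster_girth k Vs \<ge> 4 \<longrightarrow>
           (\<exists>X. complex_cluster X k (\<lambda>i. clique_complex (Vs i) (induced_edges E (Vs i))) \<and>
                shape (cverts X) k (\<lambda>i. cverts (clique_complex (Vs i) (induced_edges E (Vs i))))
                  = shape V k Vs \<and>
                complex_iso (clique_complex V E) X)) \<and>
         (cluster_girth k Vs \<ge> 5 \<longrightarrow>
           (\<exists>X. complex_cluster X k (\<lambda>i. nbhd_complex (Vs i) (induced_edges E (Vs i))) \<and>
                shape (cverts X) k (\<lambda>i. cverts (nbhd_complex (Vs i) (induced_edges E (Vs i))))
                  = shape V k Vs \<and>
                realization (nbhd_complex V E) homotopy_equivalent_space realization X))"
proof -
  have girth_4: "cluster_graph_girth_4 V E k Vs" if "4 \<le> cluster_girth k Vs"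
    using that assms no_cluster_cycle_below_girth[of 4 k Vs 3]
    by unfold_locales (simp_all add: numeral_eq_enat cluster_graph_def)
  have girth_5: "cluster_graph_girth_5 V E k Vs" if "5 \<le> cluster_girth k Vs"
    using that assms no_cluster_cycle_below_girth[of 5 k Vs 3] no_cluster_cycle_below_girth[of 5 k Vs 4]
    by unfold_locales (simp_all add: numeral_eq_enat cluster_graph_def)
  show ?thesis
    by (intro conjI impI cluster_graph_girth_4.clique_complex_cluster[OF girth_4]
        cluster_graph_girth_5.nbhd_complex_cluster[OF girth_5]) assumption+
qed

end
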